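(* Let $T, L, \ell$ be positive integers and let $\underline{C}, \overline{C}, \overline{V}, V$ be real numbers. Let $\mathcal{TK}=\{(t,k): t\in[1,T]_{\mathbb{Z}},\ k\in[\min\{t+L-1,T\},T]_{\mathbb{Z}}\}$. Consider the polytope $P$ in the variables $\alpha_t$ ($t\in[1,T]_{\mathbb{Z}}$), $\beta_{tk}$ ($(t,k)\in\mathcal{TK}$), $\gamma_{tk}$ ($t\in[L,T-\ell-1]_{\mathbb{Z}}$, $k\in[t+\ell+1,T]_{\mathbb{Z}}$), $\theta_t$ ($t\in[T-\ell,T]_{\mathbb{Z}}$) and $q^s_{tk}$ ($(t,k)\in\mathcal{TK}$, $s\in[t,k]_{\mathbb{Z}}$) defined by \begin{align*} &\textstyle\sum_{t=1}^{T}\alpha_t\le 1,\\ &\textstyle -\alpha_t+\sum_{k=t+L-1}^{T}\beta_{tk}-\sum_{k=L}^{t-\ell-1}\gamma_{kt}=0, && \forall t\in[1,T]_{\mathbb{Z}},\\ &\textstyle -\sum_{k=1}^{t-L+1}\beta_{kt}+\sum_{k=t+\ell+1}^{T}\gamma_{tk}\le 0, && \forall t\in[L,T-\ell-1]_{\mathbb{Z}},\\ &\textstyle \theta_t-\sum_{k=1}^{t-L+1}\beta_{kt}=0, && \forall t\in[T-\ell,T]_{\mathbb{Z}},\\ &\underline{C}\beta_{tk}\le q^s_{tk}\le \overline{C}\beta_{tk}, && \forall s\in[t,k]_{\mathbb{Z}},\ (t,k)\in\mathcal{TK},\\ &q^t_{tk}\le \overline{V}\beta_{tk}, && \forall (t,k)\in\mathcal{TK},\\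 &q^k_{tk}\le \overline{V}\beta_{tk}, && \forall (t,k)\in\mathcal{TK} \text{ with } k\le T-1,\\ &q^{s-1}_{tk}-q^s_{tk}\le V\beta_{tk},\quad q^{s}_{tk}-q^{s-1}_{tk}\le V\beta_{tk}, && \forall s\in[t+1,k]_{\mathbb{Z}},\ (t,k)\in\mathcal{TK},\\ &\alpha,\beta,\gamma\ge 0. \end{align*} (Empty sums are zero.) Then every extreme point of $P$ has all of its $\alpha,\beta,\gamma,\theta$ coordinates in $\{0,1\}$.
   Context: For integers $a\le b$, $[a,b]_{\mathbb{Z}}=\{a,a+1,\dots,b\}$. In the paper's model, $T$ is the number of time periods, $L$ and $\ell$ are the minimum-up and minimum-down time limits of a generator, $\underline{C},\overline{C}$ its generation lower/upper bounds, $\overline{V}$ its start-up/shut-down ramp rate and $V$ its ramp rate. *)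

theory Defs
  imports "HOL-Analysis.Analysis"
begin

datatype var = Alpha int | Beta int int | Gamma int int | Theta int | Q int int int

definition TK :: "int \<Rightarrow> int \<Rightarrow> (int \<times> int) set" where
  "TK T L = {(t,k). 1 \<le> t \<and> t \<le> T \<and> min (t + L - 1) T \<le> k \<and> k \<le> T}"

fun valid_var :: "int \<Rightarrow> int \<Rightarrow> int \<Rightarrow> var \<Rightarrow> bool" where
  "valid_var T L l (Alpha t) = (1 \<le> t \<and> t \<le> T)"
| "valid_var T L l (Beta t k) = ((t,k) \<in> TK T L)"
| "valid_var T L l (Gamma t k) = (L \<le> t \<and> t \<le> T - l - 1 \<and> t + l + 1 \<le> k \<and> k \<le> T)"
| "valid_var T L l (Theta t) = (T - l \<le> t \<and> t \<le> T)"
| "valid_var T L l (Q t k s) = ((t,k) \<in> TK T L \<and> t \<le> s \<and> s \<le> k)"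

definition polyP :: "int \<Rightarrow> int \<Rightarrow> int \<Rightarrow> real \<Rightarrow> real \<Rightarrow> real \<Rightarrow> real \<Rightarrow> (var \<Rightarrow> real) set" where
  "polyP T L l Clo Cup Vbar V = {x.
     (\<forall>v. \<not> valid_var T L l v \<longrightarrow> x v = 0) \<and>
     (\<Sum>t=1..T. x (Alpha t)) \<le> 1 \<and>
     (\<forall>t\<in>{1..T}. - x (Alpha t) + (\<Sum>k=t+L-1..T. x (Beta t k))
                   - (\<Sum>k=L..t-l-1. x (Gamma k t)) = 0) \<and>
     (\<forall>t\<in>{L..T-l-1}. - (\<Sum>k=1..t-L+1. x (Beta k t)) + (\<Sum>k=t+l+1..T. x (Gamma t k)) \<le> 0) \<and>
     (\<forall>t\<in>{T-l..T}. x (Theta t) - (\<Sum>k=1..t-L+1. x (Beta k t)) = 0) \<and>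
     (\<forall>(t,k)\<in>TK T L. \<forall>s\<in>{t..k}.
        Clo * x (Beta t k) \<le> x (Q t k s) \<and> x (Q t k s) \<le> Cup * x (Beta t k)) \<and>
     (\<forall>(t,k)\<in>TK T L. x (Q t k t) \<le> Vbar * x (Beta t k)) \<and>
     (\<forall>(t,k)\<in>TK T L. k \<le> T - 1 \<longrightarrow> x (Q t k k) \<le> Vbar * x (Beta t k)) \<and>
     (\<forall>(t,k)\<in>TK T L. \<forall>s\<in>{t+1..k}.
        x (Q t k (s-1)) - x (Q t k s) \<le> V * x (Beta t k) \<and>
        x (Q t k s) - x (Q t k (s-1)) \<le> V * x (Beta t k)) \<and>
     (\<forall>t. x (Alpha t) \<ge> 0) \<and> (\<forall>t k. x (Beta t k) \<ge> 0) \<and> (\<forall>t k. x (Gamma t k) \<ge> 0)}"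

definition is_extreme_point :: "(var \<Rightarrow> real) \<Rightarrow> (var \<Rightarrow> real) set \<Rightarrow> bool" where
  "is_extreme_point x S \<longleftrightarrow> x \<in> S \<and>
     \<not> (\<exists>a\<in>S. \<exists>b\<in>S. a \<noteq> b \<and> (\<exists>u::real. 0 < u \<and> u < 1 \<and> x = (\<lambda>v. (1 - u) * a v + u * b v)))"

end

theory Submission
  imports Defs
begin

text \<open>Read \<open>\<alpha>, \<beta>, \<gamma>\<close> as a flow of at most one unit in an acyclic network: from the source,
  \<open>\<alpha>\<^sub>t\<close> enters the start-up node of period \<open>t\<close>, \<open>\<beta>\<^sub>t\<^sub>k\<close> leads from there to the shut-down node
  after period \<open>k\<close>, and \<open>\<gamma>\<^sub>t\<^sub>k\<close> from a shut-down node back to a start-up node. Start-up nodes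
  conserve flow, shut-down nodes may absorb it, \<open>\<theta>\<close> is the inflow of the last shut-down nodes,
  and the constraints on \<open>q\<close> are homogeneous in \<open>\<beta>\<close>, so \<open>q\<close> can be rescaled along with \<open>\<beta>\<close>.

  A nonzero extreme point uses the whole unit. If an arc carried a proper fraction of the flow
  arriving at its tail, then following the share of that arc proportionally downstream splits the
  point into two parts that are points of the cone of \<open>P\<close> but not proportional to it, which is
  impossible at an extreme point. So every arc carries all or nothing of what arrives at its tail,
  and by induction along the network every such amount is 0 or 1.\<close>

section \<open>Unit preflows in layered acyclic networks\<close>

lemma sum_in_Nats: "(\<And>a. a \<in> S \<Longrightarrow> f a \<in> \<nat>) \<Longrightarrow> sum f S \<in> (\<nat> :: real set)"
  by (induct S rule: infinite_finite_induct) auto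

lemma Nats_le_one_cases: "(n::real) \<in> \<nat> \<Longrightarrow> n \<le> 1 \<Longrightarrow> n \<in> {0,1}"
  by (auto elim!: Nats_cases)

locale layered_dag =
  fixes A :: "'a set" and tail head :: "'a \<Rightarrow> int"
  assumes finite_arcs: "finite A"
    and tail_nonneg: "a \<in> A \<Longrightarrow> 0 \<le> tail a"
    and tail_less_head: "a \<in> A \<Longrightarrow> tail a < head a"
begin

definition inflow :: "('a \<Rightarrow> real) \<Rightarrow> int \<Rightarrow> real" where
  "inflow h r = (\<Sum>a\<in>{a\<in>A. head a = r}. h a)"

definition outflow :: "('a \<Rightarrow> real) \<Rightarrow> int \<Rightarrow> real" where
  "outflow h r = (\<Sum>a\<in>{a\<in>A. tail a = r}. h a)"

definition available :: "('a \<Rightarrow> real) \<Rightarrow> int \<Rightarrow> real" where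
  "available h r = inflow h r + (if r = 0 then 1 else 0)"

definition unit_preflow :: "('a \<Rightarrow> real) \<Rightarrow> bool" where
  "unit_preflow h \<longleftrightarrow> (\<forall>a\<in>A. 0 \<le> h a) \<and> (\<forall>r. outflow h r \<le> available h r) \<and> outflow h 0 = 1"

definition inherits_balance :: "('a \<Rightarrow> real) \<Rightarrow> ('a \<Rightarrow> real) \<Rightarrow> bool" where
  "inherits_balance h g \<longleftrightarrow> (\<forall>r. r \<noteq> 0 \<longrightarrow>
     outflow g r \<le> inflow g r \<and> (outflow h r = inflow h r \<longrightarrow> outflow g r = inflow g r))"

lemma inflow_nonpos_node: "r \<le> 0 \<Longrightarrow> inflow h r = 0"
  unfolding inflow_def by (rule sum.neutral) (use tail_nonneg tail_less_head in force)

lemma inflow_nonneg: "(\<And>a. a \<in> A \<Longrightarrow> 0 \<le> h a) \<Longrightarrow> 0 \<le> inflow h r"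
  unfolding inflow_def by (rule sum_nonneg) auto

lemma inflow_diff: "inflow (\<lambda>a. g a - h a) r = inflow g r - inflow h r"
  unfolding inflow_def by (rule sum_subtractf)

lemma outflow_diff: "outflow (\<lambda>a. g a - h a) r = outflow g r - outflow h r"
  unfolding outflow_def by (rule sum_subtractf)

definition cut_flow :: "('a \<Rightarrow> real) \<Rightarrow> int \<Rightarrow> real" where
  "cut_flow h r = (\<Sum>a\<in>{a\<in>A. tail a \<le> r \<and> r < head a}. h a)"

lemma cut_flow_step: "cut_flow h r + inflow h r = cut_flow h (r - 1) + outflow h r"
proof -
  have "cut_flow h r + inflow h r
      = (\<Sum>a\<in>A. (if tail a \<le> r \<and> r < head a then h a else 0) + (if head a = r then h a else 0))"
    unfolding cut_flow_def inflow_def by (simp add: sum.inter_filter[OF finite_arcs] sum.distrib)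
  also have "\<dots> = (\<Sum>a\<in>A. (if tail a \<le> r - 1 \<and> r - 1 < head a then h a else 0) + (if tail a = r then h a else 0))"
    by (rule sum.cong) (use tail_less_head in force)+
  also have "\<dots> = cut_flow h (r - 1) + outflow h r"
    unfolding cut_flow_def outflow_def by (simp add: sum.inter_filter[OF finite_arcs] sum.distrib)
  finally show ?thesis .
qed

lemma cut_flow_le_one:
  assumes "unit_preflow h"
  shows "cut_flow h r \<le> 1"
proof (cases "r < 0")
  case True
  then have "cut_flow h r = 0"
    unfolding cut_flow_def by (intro sum.neutral) (use tail_nonneg in force)
  then show ?thesis by simp
next
  case False
  have "cut_flow h (int n) \<le> 1" for n
  proof (induction n)
    case 0
    have "cut_flow h (-1) = 0"
      unfolding cut_flow_def by (intro sum.neutral) (use tail_nonneg in force)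
    then show ?case using cut_flow_step[of h 0] assms inflow_nonpos_node[of 0 h]
      by (simp add: unit_preflow_def)
  next
    case (Suc n)
    have "outflow h (int n + 1) \<le> available h (int n + 1)"
      using assms unfolding unit_preflow_def by blast
    then have "outflow h (int n + 1) \<le> inflow h (int n + 1)"
      by (simp add: available_def)
    then show ?case using Suc cut_flow_step[of h "int n + 1"] by (simp add: add.commute)
  qed
  then show ?thesis using False by (metis nonneg_int_cases not_less)
qed

lemma inflow_le_one:
  assumes h: "unit_preflow h"
  shows "inflow h r \<le> 1"
proof -
  have "inflow h r \<le> cut_flow h (r - 1)"
    unfolding inflow_def cut_flow_def
    by (rule sum_mono2) (use finite_arcs tail_less_head h in \<open>auto simp: unit_preflow_def\<close>)
  also have "\<dots> \<le> 1" using cut_flow_le_one[OF h] .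
  finally show ?thesis .
qed

lemma inherits_balance_cong:
  assumes "\<And>a. a \<in> A \<Longrightarrow> g a = g' a"
  shows "inherits_balance h g = inherits_balance h g'"
proof -
  have "outflow g = outflow g'" "inflow g = inflow g'"
    using assms by (auto simp: fun_eq_iff outflow_def inflow_def intro!: sum.cong)
  then show ?thesis by (simp add: inherits_balance_def)
qed

lemma inherits_balance_zero: "inherits_balance h (\<lambda>_. 0)"
  by (simp add: inherits_balance_def inflow_def outflow_def)

lemma inherits_balance_self: "unit_preflow h \<Longrightarrow> inherits_balance h h"
  by (simp add: inherits_balance_def unit_preflow_def available_def) (metis add.right_neutral)

lemma inherits_balance_split:
  assumes h: "\<And>r. r \<noteq> 0 \<Longrightarrow> outflow h r \<le> inflow h r"
    and g: "\<And>r. r \<noteq> 0 \<Longrightarrow> outflow g r = inflow g r \<or>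
              (\<exists>s. 0 \<le> s \<and> s \<le> 1 \<and> outflow g r = s * outflow h r \<and> inflow g r = s * inflow h r)"
  shows "inherits_balance h g" and "inherits_balance h (\<lambda>a. h a - g a)"
proof -
  have "outflow g r \<le> inflow g r \<and> outflow h r - outflow g r \<le> inflow h r - inflow g r \<and>
    (outflow h r = inflow h r \<longrightarrow> outflow g r = inflow g r)" if "r \<noteq> 0" for r
  proof -
    have le: "outflow h r \<le> inflow h r" using h[OF that] .
    from g[OF that] show ?thesis
    proof
      assume "\<exists>s. 0 \<le> s \<and> s \<le> 1 \<and> outflow g r = s * outflow h r \<and> inflow g r = s * inflow h r"
      then obtain s where s: "0 \<le> s" "s \<le> 1"
        and eqs: "outflow g r = s * outflow h r" "inflow g r = s * inflow h r" by blast
      have "s * outflow h r \<le> s * inflow h r" "(1 - s) * outflow h r \<le> (1 - s) * inflow h r"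
        using le s by (simp_all add: mult_left_mono)
      then show ?thesis by (simp add: eqs algebra_simps)
    qed (use le in simp)
  qed
  then show "inherits_balance h g" and "inherits_balance h (\<lambda>a. h a - g a)"
    by (auto simp: inherits_balance_def inflow_diff outflow_diff)
qed

text \<open>The part of a flow routed with the arc \<open>a0\<close>: a share \<open>c\<close> of every arc upstream of
  \<open>tail a0\<close>, of the arcs leaving \<open>tail a0\<close> exactly \<open>a0\<close>, and further downstream, on the arcs
  leaving a node, the share of the inflow of that node that belongs to the part.\<close>
function split_share :: "('a \<Rightarrow> real) \<Rightarrow> 'a \<Rightarrow> real \<Rightarrow> int \<Rightarrow> real" where
  "split_share h a0 c r =
     (if r \<le> tail a0 then 0 else
      (\<Sum>a\<in>{a\<in>A. head a = r}.
         (if tail a < tail a0 then c else if tail a = tail a0 then (if a = a0 then 1 else 0)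
          else if tail a < r then split_share h a0 c (tail a) else 0) * h a) / inflow h r)"
  by pat_completeness auto
termination by (relation "Wellfounded.measure (\<lambda>(h, a0, c, r). nat (r - tail a0))") auto

declare split_share.simps [simp del]

definition split_weight :: "('a \<Rightarrow> real) \<Rightarrow> 'a \<Rightarrow> real \<Rightarrow> 'a \<Rightarrow> real" where
  "split_weight h a0 c a =
     (if tail a < tail a0 then c else if tail a = tail a0 then (if a = a0 then 1 else 0)
      else split_share h a0 c (tail a))"

lemma split_share_unfold:
  assumes "tail a0 < r"
  shows "split_share h a0 c r = inflow (\<lambda>a. split_weight h a0 c a * h a) r / inflow h r"
proof -
  have "(\<Sum>a\<in>{a\<in>A. head a = r}.
         (if tail a < tail a0 then c else if tail a = tail a0 then (if a = a0 then 1 else 0)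
          else if tail a < r then split_share h a0 c (tail a) else 0) * h a)
      = inflow (\<lambda>a. split_weight h a0 c a * h a) r"
    unfolding inflow_def by (rule sum.cong) (use tail_less_head in \<open>auto simp: split_weight_def\<close>)
  then show ?thesis using assms by (subst split_share.simps) simp
qed

lemma outflow_split_weight_upstream:
  "r < tail a0 \<Longrightarrow> outflow (\<lambda>a. split_weight h a0 c a * h a) r = c * outflow h r"
  unfolding outflow_def sum_distrib_left by (rule sum.cong) (auto simp: split_weight_def)

lemma inflow_split_weight_upstream:
  "r \<le> tail a0 \<Longrightarrow> inflow (\<lambda>a. split_weight h a0 c a * h a) r = c * inflow h r"
  unfolding inflow_def sum_distrib_left
  by (rule sum.cong) (use tail_less_head in \<open>force simp: split_weight_def\<close>)+

lemma outflow_split_weight_downstream: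
  "tail a0 < r \<Longrightarrow> outflow (\<lambda>a. split_weight h a0 c a * h a) r = split_share h a0 c r * outflow h r"
  unfolding outflow_def sum_distrib_left by (rule sum.cong) (auto simp: split_weight_def)

lemma outflow_split_weight_at_tail:
  assumes "a0 \<in> A"
  shows "outflow (\<lambda>a. split_weight h a0 c a * h a) (tail a0) = h a0"
proof -
  have "outflow (\<lambda>a. split_weight h a0 c a * h a) (tail a0)
      = (\<Sum>a\<in>{a\<in>A. tail a = tail a0}. if a = a0 then h a else 0)"
    unfolding outflow_def by (rule sum.cong) (auto simp: split_weight_def)
  also have "\<dots> = h a0" using finite_arcs assms by (simp add: sum.delta')
  finally show ?thesis .
qed

lemma inflow_weighted_bounds:
  assumes "\<And>a. a \<in> A \<Longrightarrow> 0 \<le> h a"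
    and "\<And>a. a \<in> A \<Longrightarrow> head a = r \<Longrightarrow> 0 \<le> w a \<and> w a \<le> 1"
  shows "0 \<le> inflow (\<lambda>a. w a * h a) r \<and> inflow (\<lambda>a. w a * h a) r \<le> inflow h r"
  unfolding inflow_def using assms
  by (auto intro!: sum_nonneg sum_mono mult_left_le_one_le)

context
  fixes h :: "'a \<Rightarrow> real" and a0 :: 'a and c :: real
  assumes h_nonneg: "\<And>a. a \<in> A \<Longrightarrow> 0 \<le> h a" and c_nonneg: "0 \<le> c" and c_le_one: "c \<le> 1"
begin

lemma split_share_bounds: "0 \<le> split_share h a0 c r \<and> split_share h a0 c r \<le> 1"
proof (induction "nat (r - tail a0)" arbitrary: r rule: less_induct)
  case less
  show ?case
  proof (cases "r \<le> tail a0")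
    case True
    then show ?thesis by (simp add: split_share.simps)
  next
    case False
    have weight_bounds: "0 \<le> split_weight h a0 c a \<and> split_weight h a0 c a \<le> 1"
      if "a \<in> A" "head a = r" for a
      using less[of "tail a"] tail_less_head[OF that(1)] that(2) c_nonneg c_le_one
      by (auto simp: split_weight_def)
    have "0 \<le> inflow (\<lambda>a. split_weight h a0 c a * h a) r \<and>
        inflow (\<lambda>a. split_weight h a0 c a * h a) r \<le> inflow h r"
      by (rule inflow_weighted_bounds[OF h_nonneg weight_bounds])
    then show ?thesis
      using False by (auto simp: split_share_unfold divide_le_eq_1)
  qed
qed

lemma split_weight_bounds: "0 \<le> split_weight h a0 c a \<and> split_weight h a0 c a \<le> 1"
  using split_share_bounds c_nonneg c_le_one by (simp add: split_weight_def)

lemma inflow_split_weight_downstream: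
  assumes "tail a0 < r"
  shows "inflow (\<lambda>a. split_weight h a0 c a * h a) r = split_share h a0 c r * inflow h r"
proof (cases "inflow h r = 0")
  case True
  then show ?thesis
    using inflow_weighted_bounds[where h = h and w = "split_weight h a0 c" and r = r, OF h_nonneg] split_weight_bounds
    by simp
next
  case False
  then show ?thesis using split_share_unfold[OF assms] by simp
qed

end

lemma split_weight_node_cases:
  assumes h_nonneg: "\<And>a. a \<in> A \<Longrightarrow> 0 \<le> h a" and a0: "a0 \<in> A"
    and c: "0 \<le> c" "c \<le> 1" and c_avail: "c * available h (tail a0) = h a0" and "r \<noteq> 0"
  defines "g \<equiv> \<lambda>a. split_weight h a0 c a * h a"
  shows "outflow g r = inflow g r \<or>
    (\<exists>s. 0 \<le> s \<and> s \<le> 1 \<and> outflow g r = s * outflow h r \<and> inflow g r = s * inflow h r)"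
proof -
  consider "r < tail a0" | "r = tail a0" | "tail a0 < r" by linarith
  then show ?thesis
  proof cases
    case 1
    then show ?thesis using c unfolding g_def
      by (intro disjI2 exI[of _ c]) (simp add: outflow_split_weight_upstream inflow_split_weight_upstream)
  next
    case 2
    then show ?thesis using \<open>r \<noteq> 0\<close> c_avail unfolding g_def
      by (simp add: outflow_split_weight_at_tail[OF a0] inflow_split_weight_upstream available_def)
  next
    case 3
    then show ?thesis
      using split_share_bounds[OF h_nonneg c, where r = r] unfolding g_def
      by (intro disjI2 exI[of _ "split_share h a0 c r"])
        (simp add: outflow_split_weight_downstream inflow_split_weight_downstream[OF h_nonneg c])
  qed
qed

lemma exists_proportional_split:
  assumes h: "unit_preflow h" and a0: "a0 \<in> A"
    and pos: "0 < h a0" and lt: "h a0 < available h (tail a0)"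
  obtains w c where "\<And>a. 0 \<le> w a \<and> w a \<le> 1" and "w a0 = 1" and "c < 1"
    and "outflow (\<lambda>a. w a * h a) 0 = c"
    and "inherits_balance h (\<lambda>a. w a * h a)" and "inherits_balance h (\<lambda>a. (1 - w a) * h a)"
proof -
  \<comment> \<open>the share \<open>c\<close> makes the part balanced at \<open>tail a0\<close>\<close>
  define c where "c = h a0 / available h (tail a0)"
  define w where "w = split_weight h a0 c"
  let ?g = "\<lambda>a. w a * h a"
  have h_nonneg: "\<And>a. a \<in> A \<Longrightarrow> 0 \<le> h a" and h_le: "\<And>r. outflow h r \<le> available h r"
    and h_source: "outflow h 0 = 1"
    using h by (auto simp: unit_preflow_def)
  have c: "0 < c" "c < 1" and c_avail: "c * available h (tail a0) = h a0"
    using pos lt by (simp_all add: c_def)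
  have w_bounds: "\<And>a. 0 \<le> w a \<and> w a \<le> 1"
    unfolding w_def using split_weight_bounds[OF h_nonneg] c by simp
  have h_le_inflow: "outflow h r \<le> inflow h r" if "r \<noteq> 0" for r
    using h_le[of r] that by (simp add: available_def)
  note inherits_balance_split[OF h_le_inflow split_weight_node_cases[OF h_nonneg a0 _ _ c_avail]]
  then have "inherits_balance h ?g" and "inherits_balance h (\<lambda>a. (1 - w a) * h a)"
    using c by (simp_all add: w_def algebra_simps)
  moreover have "outflow ?g 0 = c"
  proof (cases "tail a0 = 0")
    case True
    then have "outflow ?g 0 = h a0"
      using outflow_split_weight_at_tail[OF a0] by (simp add: w_def)
    then show ?thesis using True c_avail inflow_nonpos_node[of 0 h] by (simp add: available_def)
  next
    case False
    then show ?thesis using tail_nonneg[OF a0] h_source unfolding w_def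
      by (simp add: outflow_split_weight_upstream)
  qed
  moreover have "w a0 = 1" by (simp add: w_def split_weight_def)
  ultimately show ?thesis using that w_bounds c by metis
qed

lemma arc_flow_le_available:
  assumes h: "unit_preflow h" and a: "a \<in> A"
  shows "h a \<le> available h (tail a)"
proof -
  have "h a \<le> outflow h (tail a)"
    unfolding outflow_def using h a finite_arcs by (intro member_le_sum) (auto simp: unit_preflow_def)
  also have "\<dots> \<le> available h (tail a)" using h by (simp add: unit_preflow_def)
  finally show ?thesis .
qed

text \<open>If no arc carries a proper fraction of the flow available at its tail, then by induction
  along the nodes every available amount is a natural number, hence 0 or 1 by the cut bound.\<close>
lemma available_01:
  assumes h: "unit_preflow h"
    and unsplit: "\<And>a. a \<in> A \<Longrightarrow> \<not> (0 < h a \<and> h a < available h (tail a))"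
  shows "available h r \<in> {0, 1}"
proof (induction "nat r" arbitrary: r rule: less_induct)
  case less
  show ?case
  proof (cases "r \<le> 0")
    case True
    then show ?thesis using inflow_nonpos_node[OF True] by (simp add: available_def)
  next
    case False
    have "h a \<in> \<nat>" if "a \<in> A" "head a = r" for a
    proof -
      have "available h (tail a) \<in> {0, 1}"
        using less[of "tail a"] tail_nonneg[OF that(1)] tail_less_head[OF that(1)] that(2) by simp
      moreover have "0 \<le> h a" "h a \<le> available h (tail a)"
        using h that(1) arc_flow_le_available[OF h that(1)] by (auto simp: unit_preflow_def)
      then have "h a = 0 \<or> h a = available h (tail a)" using unsplit[OF that(1)] by linarith
      ultimately show ?thesis by auto
    qed
    then have "inflow h r \<in> \<nat>" unfolding inflow_def by (intro sum_in_Nats) auto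
    then show ?thesis
      using False Nats_le_one_cases inflow_le_one[OF h] by (simp add: available_def)
  qed
qed

lemma arc_flow_01:
  assumes h: "unit_preflow h"
    and unsplit: "\<And>a. a \<in> A \<Longrightarrow> \<not> (0 < h a \<and> h a < available h (tail a))"
    and a: "a \<in> A"
  shows "h a \<in> {0, 1}"
  using available_01[OF h unsplit, of "tail a"] unsplit[OF a] arc_flow_le_available[OF h a] h a
  by (force simp: unit_preflow_def)

end

section \<open>The cone of \<open>P\<close> and its extreme points\<close>

definition polyP_cone ::
  "int \<Rightarrow> int \<Rightarrow> int \<Rightarrow> real \<Rightarrow> real \<Rightarrow> real \<Rightarrow> real \<Rightarrow> (var \<Rightarrow> real) set" where
  "polyP_cone T L l Clo Cup Vbar V = {x.
     (\<forall>v. \<not> valid_var T L l v \<longrightarrow> x v = 0) \<and>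
     (\<forall>t\<in>{1..T}. - x (Alpha t) + (\<Sum>k=t+L-1..T. x (Beta t k))
                   - (\<Sum>k=L..t-l-1. x (Gamma k t)) = 0) \<and>
     (\<forall>t\<in>{L..T-l-1}. - (\<Sum>k=1..t-L+1. x (Beta k t)) + (\<Sum>k=t+l+1..T. x (Gamma t k)) \<le> 0) \<and>
     (\<forall>t\<in>{T-l..T}. x (Theta t) - (\<Sum>k=1..t-L+1. x (Beta k t)) = 0) \<and>
     (\<forall>(t,k)\<in>TK T L. \<forall>s\<in>{t..k}.
        Clo * x (Beta t k) \<le> x (Q t k s) \<and> x (Q t k s) \<le> Cup * x (Beta t k)) \<and>
     (\<forall>(t,k)\<in>TK T L. x (Q t k t) \<le> Vbar * x (Beta t k)) \<and>
     (\<forall>(t,k)\<in>TK T L. k \<le> T - 1 \<longrightarrow> x (Q t k k) \<le> Vbar * x (Beta t k)) \<and>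
     (\<forall>(t,k)\<in>TK T L. \<forall>s\<in>{t+1..k}.
        x (Q t k (s-1)) - x (Q t k s) \<le> V * x (Beta t k) \<and>
        x (Q t k s) - x (Q t k (s-1)) \<le> V * x (Beta t k)) \<and>
     (\<forall>t. x (Alpha t) \<ge> 0) \<and> (\<forall>t k. x (Beta t k) \<ge> 0) \<and> (\<forall>t k. x (Gamma t k) \<ge> 0)}"

definition alpha_sum :: "int \<Rightarrow> (var \<Rightarrow> real) \<Rightarrow> real" where
  "alpha_sum T x = (\<Sum>t=1..T. x (Alpha t))"

lemma polyP_eq_cone:
  "polyP T L l Clo Cup Vbar V = {x \<in> polyP_cone T L l Clo Cup Vbar V. alpha_sum T x \<le> 1}"
  unfolding polyP_def polyP_cone_def alpha_sum_def by blast

context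
  fixes T L l :: int and Clo Cup Vbar V :: real and x :: "var \<Rightarrow> real"
  assumes x: "x \<in> polyP_cone T L l Clo Cup Vbar V"
begin

lemma polyP_cone_vanish: "\<not> valid_var T L l v \<Longrightarrow> x v = 0"
  using x by (simp add: polyP_cone_def)

lemma polyP_cone_start_balance:
  assumes "t \<in> {1..T}"
  shows "x (Alpha t) + (\<Sum>k=L..t-l-1. x (Gamma k t)) = (\<Sum>k=t+L-1..T. x (Beta t k))"
proof -
  have "- x (Alpha t) + (\<Sum>k=t+L-1..T. x (Beta t k)) - (\<Sum>k=L..t-l-1. x (Gamma k t)) = 0"
    using x assms unfolding polyP_cone_def mem_Collect_eq by blast
  then show ?thesis by linarith
qed

lemma polyP_cone_end_balance:
  "t \<in> {L..T-l-1} \<Longrightarrow> (\<Sum>k=t+l+1..T. x (Gamma t k)) \<le> (\<Sum>k=1..t-L+1. x (Beta k t))"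
  using x by (simp add: polyP_cone_def)

lemma polyP_cone_Theta: "t \<in> {T-l..T} \<Longrightarrow> x (Theta t) = (\<Sum>k=1..t-L+1. x (Beta k t))"
  using x by (simp add: polyP_cone_def)

lemma polyP_cone_nonneg: "0 \<le> x (Alpha t)" "0 \<le> x (Beta t k)" "0 \<le> x (Gamma t k)"
  using x by (simp_all add: polyP_cone_def)

lemma polyP_cone_Q:
  assumes "(t,k) \<in> TK T L"
  shows "s \<in> {t..k} \<Longrightarrow> Clo * x (Beta t k) \<le> x (Q t k s) \<and> x (Q t k s) \<le> Cup * x (Beta t k)"
    and "x (Q t k t) \<le> Vbar * x (Beta t k)"
    and "k \<le> T - 1 \<Longrightarrow> x (Q t k k) \<le> Vbar * x (Beta t k)"
    and "s \<in> {t+1..k} \<Longrightarrow> x (Q t k (s-1)) - x (Q t k s) \<le> V * x (Beta t k) \<and>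
           x (Q t k s) - x (Q t k (s-1)) \<le> V * x (Beta t k)"
  using x assms unfolding polyP_cone_def mem_Collect_eq by blast+

end

lemma polyP_coneI:
  assumes "\<And>v. \<not> valid_var T L l v \<Longrightarrow> x v = 0"
    and "\<And>t. t \<in> {1..T} \<Longrightarrow> x (Alpha t) + (\<Sum>k=L..t-l-1. x (Gamma k t)) = (\<Sum>k=t+L-1..T. x (Beta t k))"
    and "\<And>t. t \<in> {L..T-l-1} \<Longrightarrow> (\<Sum>k=t+l+1..T. x (Gamma t k)) \<le> (\<Sum>k=1..t-L+1. x (Beta k t))"
    and "\<And>t. t \<in> {T-l..T} \<Longrightarrow> x (Theta t) = (\<Sum>k=1..t-L+1. x (Beta k t))"
    and "\<And>t k s. (t,k) \<in> TK T L \<Longrightarrow> s \<in> {t..k} \<Longrightarrow>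
           Clo * x (Beta t k) \<le> x (Q t k s) \<and> x (Q t k s) \<le> Cup * x (Beta t k)"
    and "\<And>t k. (t,k) \<in> TK T L \<Longrightarrow> x (Q t k t) \<le> Vbar * x (Beta t k)"
    and "\<And>t k. (t,k) \<in> TK T L \<Longrightarrow> k \<le> T - 1 \<Longrightarrow> x (Q t k k) \<le> Vbar * x (Beta t k)"
    and "\<And>t k s. (t,k) \<in> TK T L \<Longrightarrow> s \<in> {t+1..k} \<Longrightarrow>
           x (Q t k (s-1)) - x (Q t k s) \<le> V * x (Beta t k) \<and> x (Q t k s) - x (Q t k (s-1)) \<le> V * x (Beta t k)"
    and "\<And>t. 0 \<le> x (Alpha t)" "\<And>t k. 0 \<le> x (Beta t k)" "\<And>t k. 0 \<le> x (Gamma t k)"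
  shows "x \<in> polyP_cone T L l Clo Cup Vbar V"
proof -
  have "- x (Alpha t) + (\<Sum>k=t+L-1..T. x (Beta t k)) - (\<Sum>k=L..t-l-1. x (Gamma k t)) = 0"
    if "t \<in> {1..T}" for t
    using assms(2)[OF that] by linarith
  moreover have "- (\<Sum>k=1..t-L+1. x (Beta k t)) + (\<Sum>k=t+l+1..T. x (Gamma t k)) \<le> 0"
    if "t \<in> {L..T-l-1}" for t
    using assms(3)[OF that] by linarith
  moreover have "x (Theta t) - (\<Sum>k=1..t-L+1. x (Beta k t)) = 0" if "t \<in> {T-l..T}" for t
    using assms(4)[OF that] by linarith
  ultimately show ?thesis
    unfolding polyP_cone_def mem_Collect_eq using assms(1,5-) by blast
qed

lemma lincomb_le:
  "(u1::real) \<le> v1 \<Longrightarrow> u2 \<le> v2 \<Longrightarrow> 0 \<le> a \<Longrightarrow> 0 \<le> b \<Longrightarrow>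
    a * u1 + b * u2 \<le> a * v1 + b * v2"
  by (simp add: add_mono mult_left_mono)

lemma polyP_cone_lincomb:
  assumes y: "y \<in> polyP_cone T L l Clo Cup Vbar V" and z: "z \<in> polyP_cone T L l Clo Cup Vbar V"
    and a: "0 \<le> a" and b: "0 \<le> b"
  shows "(\<lambda>v. a * y v + b * z v) \<in> polyP_cone T L l Clo Cup Vbar V"
proof (rule polyP_coneI)
  fix t assume "t \<in> {1..T}"
  then show "a * y (Alpha t) + b * z (Alpha t) + (\<Sum>k=L..t-l-1. a * y (Gamma k t) + b * z (Gamma k t))
      = (\<Sum>k=t+L-1..T. a * y (Beta t k) + b * z (Beta t k))"
  proof -
    have "a * (y (Alpha t) + (\<Sum>k=L..t-l-1. y (Gamma k t))) + b * (z (Alpha t) + (\<Sum>k=L..t-l-1. z (Gamma k t)))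
        = a * (\<Sum>k=t+L-1..T. y (Beta t k)) + b * (\<Sum>k=t+L-1..T. z (Beta t k))"
      using polyP_cone_start_balance[OF y \<open>t \<in> {1..T}\<close>] polyP_cone_start_balance[OF z \<open>t \<in> {1..T}\<close>]
      by simp
    then show ?thesis by (simp add: sum.distrib sum_distrib_left algebra_simps)
  qed
next
  fix t assume "t \<in> {L..T-l-1}"
  then show "(\<Sum>k=t+l+1..T. a * y (Gamma t k) + b * z (Gamma t k)) \<le> (\<Sum>k=1..t-L+1. a * y (Beta k t) + b * z (Beta k t))"
    using lincomb_le[OF polyP_cone_end_balance[OF y] polyP_cone_end_balance[OF z] a b]
    by (simp add: sum.distrib flip: sum_distrib_left)
next
  fix t assume "t \<in> {T-l..T}"
  then show "a * y (Theta t) + b * z (Theta t) = (\<Sum>k=1..t-L+1. a * y (Beta k t) + b * z (Beta k t))"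
    using polyP_cone_Theta[OF y] polyP_cone_Theta[OF z] by (simp add: sum.distrib flip: sum_distrib_left)
next
  fix t k s assume tk: "(t,k) \<in> TK T L" and s: "s \<in> {t..k}"
  note q = polyP_cone_Q(1)[OF y tk s] polyP_cone_Q(1)[OF z tk s]
  show "Clo * (a * y (Beta t k) + b * z (Beta t k)) \<le> a * y (Q t k s) + b * z (Q t k s) \<and>
      a * y (Q t k s) + b * z (Q t k s) \<le> Cup * (a * y (Beta t k) + b * z (Beta t k))"
    using lincomb_le[of "Clo * _" _ "Clo * _", OF conjunct1[OF q(1)] conjunct1[OF q(2)] a b]
      lincomb_le[OF conjunct2[OF q(1)] conjunct2[OF q(2)] a b]
    by (simp add: algebra_simps)
next
  fix t k assume tk: "(t,k) \<in> TK T L"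
  show "a * y (Q t k t) + b * z (Q t k t) \<le> Vbar * (a * y (Beta t k) + b * z (Beta t k))"
    using lincomb_le[OF polyP_cone_Q(2)[OF y tk] polyP_cone_Q(2)[OF z tk] a b] by (simp add: algebra_simps)
next
  fix t k assume tk: "(t,k) \<in> TK T L" and "k \<le> T - 1"
  then show "a * y (Q t k k) + b * z (Q t k k) \<le> Vbar * (a * y (Beta t k) + b * z (Beta t k))"
    using lincomb_le[OF polyP_cone_Q(3)[OF y tk] polyP_cone_Q(3)[OF z tk] a b] by (simp add: algebra_simps)
next
  fix t k s assume tk: "(t,k) \<in> TK T L" and s: "s \<in> {t+1..k}"
  note q = polyP_cone_Q(4)[OF y tk s] polyP_cone_Q(4)[OF z tk s]
  show "a * y (Q t k (s-1)) + b * z (Q t k (s-1)) - (a * y (Q t k s) + b * z (Q t k s))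
        \<le> V * (a * y (Beta t k) + b * z (Beta t k)) \<and>
      a * y (Q t k s) + b * z (Q t k s) - (a * y (Q t k (s-1)) + b * z (Q t k (s-1)))
        \<le> V * (a * y (Beta t k) + b * z (Beta t k))"
    using lincomb_le[OF conjunct1[OF q(1)] conjunct1[OF q(2)] a b]
      lincomb_le[OF conjunct2[OF q(1)] conjunct2[OF q(2)] a b]
    by (simp add: algebra_simps)
next
  fix v assume "\<not> valid_var T L l v"
  then show "a * y v + b * z v = 0" by (simp add: polyP_cone_vanish[OF y] polyP_cone_vanish[OF z])
qed (use polyP_cone_nonneg[OF y] polyP_cone_nonneg[OF z] a b in simp_all)

lemma alpha_sum_lincomb: "alpha_sum T (\<lambda>v. a * y v + b * z v) = a * alpha_sum T y + b * alpha_sum T z"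
  by (simp add: alpha_sum_def sum.distrib sum_distrib_left)

lemma alpha_sum_nonneg: "y \<in> polyP_cone T L l Clo Cup Vbar V \<Longrightarrow> 0 \<le> alpha_sum T y"
  unfolding alpha_sum_def by (rule sum_nonneg) (simp add: polyP_cone_nonneg)

lemma polyP_lincomb_memI:
  assumes "y \<in> polyP_cone T L l Clo Cup Vbar V" "z \<in> polyP_cone T L l Clo Cup Vbar V"
    and "0 \<le> a" "0 \<le> b" "a * alpha_sum T y + b * alpha_sum T z \<le> 1"
  shows "(\<lambda>v. a * y v + b * z v) \<in> polyP T L l Clo Cup Vbar V"
  using polyP_cone_lincomb[OF assms(1-4)] assms(5) by (simp add: polyP_eq_cone alpha_sum_lincomb)

lemma extreme_point_symmetric_perturbation:
  assumes "is_extreme_point x S"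
    and "(\<lambda>v. x v + d v) \<in> S" and "(\<lambda>v. x v - d v) \<in> S"
  shows "d v = 0"
proof (rule ccontr)
  assume "d v \<noteq> 0"
  then have "(\<lambda>v. x v - d v) \<noteq> (\<lambda>v. x v + d v)" by (auto simp: fun_eq_iff)
  moreover have "x = (\<lambda>v. (1 - 1/2) * (x v - d v) + 1/2 * (x v + d v))"
    by (simp add: fun_eq_iff field_simps)
  ultimately have "\<exists>a\<in>S. \<exists>b\<in>S. a \<noteq> b \<and>
      (\<exists>u::real. 0 < u \<and> u < 1 \<and> x = (\<lambda>v. (1 - u) * a v + u * b v))"
    using assms(2,3)
    by (intro bexI[of _ "\<lambda>v. x v - d v"] bexI[of _ "\<lambda>v. x v + d v"] conjI exI[of _ "1/2"]) auto
  then show False using assms(1) by (simp add: is_extreme_point_def)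
qed

lemma extreme_point_zero_or_alpha_sum_one:
  assumes ex: "is_extreme_point x (polyP T L l Clo Cup Vbar V)"
  shows "(\<forall>v. x v = 0) \<or> alpha_sum T x = 1"
proof -
  define s where "s = alpha_sum T x"
  have x: "x \<in> polyP_cone T L l Clo Cup Vbar V" and s: "0 \<le> s" "s \<le> 1"
    using ex alpha_sum_nonneg by (auto simp: is_extreme_point_def polyP_eq_cone s_def)
  have "1 - (2 - s) * s = (1 - s)\<^sup>2" by (simp add: power2_eq_square algebra_simps)
  then have "(2 - s) * s \<le> 1" using zero_le_power2[of "1 - s"] by linarith
  then have "(\<lambda>v. (2 - s) * x v + 0 * x v) \<in> polyP T L l Clo Cup Vbar V"
    using s by (intro polyP_lincomb_memI[OF x x]) (simp_all add: s_def)
  moreover have "(\<lambda>v. s * x v + 0 * x v) \<in> polyP T L l Clo Cup Vbar V"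
    using s by (intro polyP_lincomb_memI[OF x x]) (simp_all add: s_def mult_le_one)
  ultimately have "(1 - s) * x v = 0" for v
    by (intro extreme_point_symmetric_perturbation[OF ex]) (simp_all add: algebra_simps)
  then show ?thesis by (auto simp: s_def)
qed

lemma extreme_point_proportional_part:
  assumes ex: "is_extreme_point x (polyP T L l Clo Cup Vbar V)" and total: "alpha_sum T x = 1"
    and y: "y \<in> polyP_cone T L l Clo Cup Vbar V" and z: "z \<in> polyP_cone T L l Clo Cup Vbar V"
    and x_eq: "\<And>v. x v = y v + z v"
  shows "y v = alpha_sum T y * x v"
proof -
  define a where "a = alpha_sum T y"
  define b where "b = alpha_sum T z"
  have ab: "0 \<le> a" "0 \<le> b" "a + b = 1"
    using alpha_sum_nonneg[OF y] alpha_sum_nonneg[OF z] total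
    by (simp_all add: a_def b_def alpha_sum_def x_eq sum.distrib)
  \<comment> \<open>perturb \<open>x\<close> along \<open>b y - a z\<close>, which leaves \<open>alpha_sum\<close> unchanged\<close>
  have "(1 + b) * a + b * b = a + b * (a + b)" "a * a + (1 + a) * b = a * (a + b) + b"
    by (simp_all add: algebra_simps)
  then have "(1 + b) * a + b * b \<le> 1" "a * a + (1 + a) * b \<le> 1"
    using ab by simp_all
  then have "(\<lambda>v. (1 + b) * y v + b * z v) \<in> polyP T L l Clo Cup Vbar V"
    and "(\<lambda>v. a * y v + (1 + a) * z v) \<in> polyP T L l Clo Cup Vbar V"
    using ab by (simp_all add: polyP_lincomb_memI[OF y z] flip: a_def b_def)
  moreover have "(\<lambda>v. (1 + b) * y v + b * z v) = (\<lambda>v. x v + (b * y v - a * z v))"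
    and "(\<lambda>v. a * y v + (1 + a) * z v) = (\<lambda>v. x v - (b * y v - a * z v))"
    using ab(3) by (simp_all add: fun_eq_iff x_eq algebra_simps flip: eq_diff_eq)
  ultimately have "b * y v - a * z v = 0"
    by (intro extreme_point_symmetric_perturbation[OF ex]) simp_all
  moreover have "y v = (a + b) * y v" using ab(3) by simp
  ultimately have "y v = a * y v + a * z v" by (simp add: distrib_right)
  then show ?thesis by (simp add: x_eq a_def algebra_simps)
qed

section \<open>\<open>P\<close> as a network flow\<close>

text \<open>Node 0 is the source, node \<open>2t\<close> the start-up in period \<open>t\<close> and node \<open>2k + 1\<close> the
  shut-down after period \<open>k\<close>; \<open>\<theta>\<close> and \<open>q\<close> are not arcs and get dummy ends.\<close>
fun uc_tail :: "var \<Rightarrow> int" where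
  "uc_tail (Alpha t) = 0"
| "uc_tail (Beta t k) = 2 * t"
| "uc_tail (Gamma t k) = 2 * t + 1"
| "uc_tail (Theta t) = 0"
| "uc_tail (Q t k s) = 0"

fun uc_head :: "var \<Rightarrow> int" where
  "uc_head (Alpha t) = 2 * t"
| "uc_head (Beta t k) = 2 * k + 1"
| "uc_head (Gamma t k) = 2 * k"
| "uc_head (Theta t) = 0"
| "uc_head (Q t k s) = 0"

text \<open>The coordinates \<open>\<beta>\<^sub>t\<^sub>T\<close> with \<open>t + L - 1 > T\<close>, which belong to \<open>TK\<close> only through the \<open>min\<close>,
  occur in no flow constraint and are not arcs.\<close>
fun is_uc_arc :: "int \<Rightarrow> int \<Rightarrow> int \<Rightarrow> var \<Rightarrow> bool" where
  "is_uc_arc T L l (Alpha t) \<longleftrightarrow> 1 \<le> t \<and> t \<le> T"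
| "is_uc_arc T L l (Beta t k) \<longleftrightarrow> 1 \<le> t \<and> t + L - 1 \<le> k \<and> k \<le> T"
| "is_uc_arc T L l (Gamma t k) \<longleftrightarrow> L \<le> t \<and> t \<le> T - l - 1 \<and> t + l + 1 \<le> k \<and> k \<le> T"
| "is_uc_arc T L l (Theta t) \<longleftrightarrow> False"
| "is_uc_arc T L l (Q t k s) \<longleftrightarrow> False"

definition uc_arcs :: "int \<Rightarrow> int \<Rightarrow> int \<Rightarrow> var set" where
  "uc_arcs T L l = {a. is_uc_arc T L l a}"

lemma odd_neq_even_int [simp]:
  "2 * a + 1 \<noteq> 2 * (b::int)" "2 * b \<noteq> 2 * (a::int) + 1" "2 * a + 1 \<noteq> (0::int)"
  by presburger+

locale uc_network =
  fixes T L l :: int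
  assumes L_pos: "1 \<le> L" and l_pos: "1 \<le> l"

sublocale uc_network \<subseteq> layered_dag "uc_arcs T L l" uc_tail uc_head
proof
  fix a assume "a \<in> uc_arcs T L l"
  then show "0 \<le> uc_tail a" and "uc_tail a < uc_head a"
    using L_pos l_pos by (cases a; simp add: uc_arcs_def)+
next
  show "finite (uc_arcs T L l)"
  proof (rule finite_subset)
    show "uc_arcs T L l \<subseteq>
        Alpha ` {1..T} \<union> case_prod Beta ` ({1..T} \<times> {1..T}) \<union> case_prod Gamma ` ({1..T} \<times> {1..T})"
      using L_pos l_pos by (auto simp: uc_arcs_def image_iff elim!: is_uc_arc.elims)
  qed simp
qed

context uc_network
begin

lemma outflow_start_node:
  assumes "1 \<le> t" "t \<le> T"
  shows "outflow h (2 * t) = (\<Sum>k=t+L-1..T. h (Beta t k))"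
proof -
  have "{a \<in> uc_arcs T L l. uc_tail a = 2 * t} = Beta t ` {t+L-1..T}"
    using assms L_pos by (auto simp: uc_arcs_def image_iff elim!: is_uc_arc.elims)
  then show ?thesis by (simp add: outflow_def sum.reindex inj_on_def)
qed

lemma inflow_start_node:
  assumes "1 \<le> t" "t \<le> T"
  shows "inflow h (2 * t) = h (Alpha t) + (\<Sum>k=L..t-l-1. h (Gamma k t))"
proof -
  have "{a \<in> uc_arcs T L l. uc_head a = 2 * t} = insert (Alpha t) ((\<lambda>k. Gamma k t) ` {L..t-l-1})"
    using assms L_pos l_pos by (auto simp: uc_arcs_def image_iff elim!: is_uc_arc.elims)
  then show ?thesis by (simp add: inflow_def sum.reindex inj_on_def image_iff)
qed

lemma outflow_end_node:
  assumes "L \<le> t" "t \<le> T - l - 1"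
  shows "outflow h (2 * t + 1) = (\<Sum>k=t+l+1..T. h (Gamma t k))"
proof -
  have "{a \<in> uc_arcs T L l. uc_tail a = 2 * t + 1} = Gamma t ` {t+l+1..T}"
    using assms by (auto simp: uc_arcs_def image_iff elim!: is_uc_arc.elims)
  then show ?thesis by (simp add: outflow_def sum.reindex inj_on_def)
qed

lemma inflow_end_node:
  assumes "t \<le> T"
  shows "inflow h (2 * t + 1) = (\<Sum>k=1..t-L+1. h (Beta k t))"
proof -
  have "{a \<in> uc_arcs T L l. uc_head a = 2 * t + 1} = (\<lambda>k. Beta k t) ` {1..t-L+1}"
    using assms by (auto simp: uc_arcs_def image_iff elim!: is_uc_arc.elims)
  then show ?thesis by (simp add: inflow_def sum.reindex inj_on_def)
qed

lemma outflow_source: "outflow h 0 = (\<Sum>t=1..T. h (Alpha t))"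
proof -
  have "{a \<in> uc_arcs T L l. uc_tail a = 0} = Alpha ` {1..T}"
    using L_pos by (auto simp: uc_arcs_def image_iff elim!: is_uc_arc.elims)
  then show ?thesis by (simp add: outflow_def sum.reindex inj_on_def)
qed

lemma outflow_other_node:
  assumes "r \<noteq> 0" and "r \<notin> (\<lambda>t. 2 * t) ` {1..T}" and "r \<notin> (\<lambda>t. 2 * t + 1) ` {L..T-l-1}"
  shows "outflow h r = 0"
proof -
  have no_arcs: "{a \<in> uc_arcs T L l. uc_tail a = r} = {}"
    using assms L_pos l_pos by (auto simp: uc_arcs_def image_iff elim!: is_uc_arc.elims)
  show ?thesis unfolding outflow_def no_arcs by simp
qed

lemma polyP_cone_start_node_balanced:
  assumes "x \<in> polyP_cone T L l Clo Cup Vbar V" and "t \<in> {1..T}"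
  shows "outflow x (2 * t) = inflow x (2 * t)"
  using polyP_cone_start_balance[OF assms] assms(2)
  by (simp add: outflow_start_node inflow_start_node)

lemma polyP_cone_unit_preflow:
  assumes x: "x \<in> polyP_cone T L l Clo Cup Vbar V" and total: "alpha_sum T x = 1"
  shows "unit_preflow x"
proof -
  have nonneg: "\<And>a. a \<in> uc_arcs T L l \<Longrightarrow> 0 \<le> x a"
    using polyP_cone_nonneg[OF x] by (auto simp: uc_arcs_def elim!: is_uc_arc.elims)
  have source: "outflow x 0 = 1" using total by (simp add: outflow_source alpha_sum_def)
  have "outflow x r \<le> available x r" for r
  proof -
    consider "r = 0" | t where "t \<in> {1..T}" "r = 2 * t" | t where "t \<in> {L..T-l-1}" "r = 2 * t + 1"
      | "r \<noteq> 0" "r \<notin> (\<lambda>t. 2 * t) ` {1..T}" "r \<notin> (\<lambda>t. 2 * t + 1) ` {L..T-l-1}"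
      by blast
    then show ?thesis
    proof cases
      case 1
      then show ?thesis using source inflow_nonpos_node[of 0 x] by (simp add: available_def)
    next
      case (2 t)
      then show ?thesis using polyP_cone_start_node_balanced[OF x] by (simp add: available_def)
    next
      case (3 t)
      then have "t \<le> T" using l_pos by simp
      with 3 show ?thesis using polyP_cone_end_balance[OF x \<open>t \<in> {L..T-l-1}\<close>]
        by (simp add: available_def outflow_end_node inflow_end_node)
    next
      case 4
      then show ?thesis using inflow_nonneg[OF nonneg, where r = r] by (simp add: outflow_other_node available_def)
    qed
  qed
  then show ?thesis using nonneg source by (simp add: unit_preflow_def)
qed

end

section \<open>Integrality of the extreme points\<close>

text \<open>Each \<open>q\<^sup>s\<^sub>t\<^sub>k\<close> is scaled with its \<open>\<beta>\<^sub>t\<^sub>k\<close>, so that the homogeneous constraints on \<open>q\<close> survive.\<close>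
definition weighted_point ::
  "int \<Rightarrow> int \<Rightarrow> int \<Rightarrow> (var \<Rightarrow> real) \<Rightarrow> (var \<Rightarrow> real) \<Rightarrow> var \<Rightarrow> real" where
  "weighted_point T L l w x v = (case v of
       Theta t \<Rightarrow>
         if T - l \<le> t \<and> t \<le> T then (\<Sum>k=1..t-L+1. w (Beta k t) * x (Beta k t)) else 0
     | Q t k s \<Rightarrow> w (Beta t k) * x v
     | _ \<Rightarrow> w v * x v)"

lemma weighted_point_arc: "is_uc_arc T L l a \<Longrightarrow> weighted_point T L l w x a = w a * x a"
  by (cases a) (auto simp: weighted_point_def)

lemma alpha_sum_weighted_point: "alpha_sum T (weighted_point T L l w x) = (\<Sum>t=1..T. w (Alpha t) * x (Alpha t))"
  by (simp add: alpha_sum_def weighted_point_def)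

lemma weighted_point_complement:
  assumes x: "x \<in> polyP_cone T L l Clo Cup Vbar V"
  shows "x v = weighted_point T L l w x v + weighted_point T L l (\<lambda>v. 1 - w v) x v"
proof (cases v)
  case (Theta t)
  show ?thesis
  proof (cases "T - l \<le> t \<and> t \<le> T")
    case True
    then show ?thesis using polyP_cone_Theta[OF x, of t] Theta
      by (simp add: weighted_point_def sum.distrib[symmetric] algebra_simps)
  next
    case False
    then show ?thesis using Theta polyP_cone_vanish[OF x, of v] by (simp add: weighted_point_def False)
  qed
qed (simp_all add: weighted_point_def algebra_simps)

context uc_network
begin

lemma weighted_point_in_polyP_cone:
  assumes x: "x \<in> polyP_cone T L l Clo Cup Vbar V" and w: "\<And>v. 0 \<le> w v"
    and balance: "inherits_balance x (\<lambda>a. w a * x a)"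
  shows "weighted_point T L l w x \<in> polyP_cone T L l Clo Cup Vbar V"
proof -
  let ?y = "weighted_point T L l w x"
  show ?thesis
  proof (rule polyP_coneI)
    fix v assume "\<not> valid_var T L l v"
    then show "?y v = 0"
      using polyP_cone_vanish[OF x, of v] by (cases v) (auto simp: weighted_point_def)
  next
    fix t assume t: "t \<in> {1..T}"
    then have "outflow (\<lambda>a. w a * x a) (2 * t) = inflow (\<lambda>a. w a * x a) (2 * t)"
      using balance polyP_cone_start_node_balanced[OF x t] by (simp add: inherits_balance_def)
    then show "?y (Alpha t) + (\<Sum>k=L..t-l-1. ?y (Gamma k t)) = (\<Sum>k=t+L-1..T. ?y (Beta t k))"
      using t by (simp add: outflow_start_node inflow_start_node weighted_point_def)
  next
    fix t assume t: "t \<in> {L..T-l-1}"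
    then have "outflow (\<lambda>a. w a * x a) (2 * t + 1) \<le> inflow (\<lambda>a. w a * x a) (2 * t + 1)"
      using balance by (simp add: inherits_balance_def)
    then show "(\<Sum>k=t+l+1..T. ?y (Gamma t k)) \<le> (\<Sum>k=1..t-L+1. ?y (Beta k t))"
      using t l_pos by (simp add: outflow_end_node inflow_end_node weighted_point_def)
  next
    fix t k s assume tk: "(t,k) \<in> TK T L" and "s \<in> {t..k}"
    then have "w (Beta t k) * (Clo * x (Beta t k)) \<le> w (Beta t k) * x (Q t k s)"
      "w (Beta t k) * x (Q t k s) \<le> w (Beta t k) * (Cup * x (Beta t k))"
      using polyP_cone_Q(1)[OF x tk] w by (simp_all add: mult_left_mono)
    then show "Clo * ?y (Beta t k) \<le> ?y (Q t k s) \<and> ?y (Q t k s) \<le> Cup * ?y (Beta t k)"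
      by (simp add: weighted_point_def algebra_simps)
  next
    fix t k assume tk: "(t,k) \<in> TK T L"
    have "w (Beta t k) * x (Q t k t) \<le> w (Beta t k) * (Vbar * x (Beta t k))"
      using polyP_cone_Q(2)[OF x tk] w by (simp add: mult_left_mono)
    then show "?y (Q t k t) \<le> Vbar * ?y (Beta t k)"
      by (simp add: weighted_point_def algebra_simps)
  next
    fix t k assume tk: "(t,k) \<in> TK T L" and "k \<le> T - 1"
    then have "w (Beta t k) * x (Q t k k) \<le> w (Beta t k) * (Vbar * x (Beta t k))"
      using polyP_cone_Q(3)[OF x tk] w by (simp add: mult_left_mono)
    then show "?y (Q t k k) \<le> Vbar * ?y (Beta t k)"
      by (simp add: weighted_point_def algebra_simps)
  next
    fix t k s assume tk: "(t,k) \<in> TK T L" and "s \<in> {t+1..k}"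
    then have "w (Beta t k) * (x (Q t k (s-1)) - x (Q t k s)) \<le> w (Beta t k) * (V * x (Beta t k))"
      "w (Beta t k) * (x (Q t k s) - x (Q t k (s-1))) \<le> w (Beta t k) * (V * x (Beta t k))"
      using polyP_cone_Q(4)[OF x tk] w by (simp_all add: mult_left_mono)
    then show "?y (Q t k (s-1)) - ?y (Q t k s) \<le> V * ?y (Beta t k) \<and>
        ?y (Q t k s) - ?y (Q t k (s-1)) \<le> V * ?y (Beta t k)"
      by (simp add: weighted_point_def algebra_simps)
  qed (use w polyP_cone_nonneg[OF x] in \<open>simp_all add: weighted_point_def\<close>)
qed

lemma extreme_point_weighted_point_proportional:
  assumes ex: "is_extreme_point x (polyP T L l Clo Cup Vbar V)" and total: "alpha_sum T x = 1"
    and w: "\<And>v. 0 \<le> w v \<and> w v \<le> 1"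
    and balance: "inherits_balance x (\<lambda>a. w a * x a)" "inherits_balance x (\<lambda>a. (1 - w a) * x a)"
  shows "weighted_point T L l w x v = (\<Sum>t=1..T. w (Alpha t) * x (Alpha t)) * x v"
proof -
  have x: "x \<in> polyP_cone T L l Clo Cup Vbar V"
    using ex by (simp add: is_extreme_point_def polyP_eq_cone)
  have "weighted_point T L l w x \<in> polyP_cone T L l Clo Cup Vbar V"
    and "weighted_point T L l (\<lambda>v. 1 - w v) x \<in> polyP_cone T L l Clo Cup Vbar V"
    using w balance by (auto intro!: weighted_point_in_polyP_cone[OF x])
  from extreme_point_proportional_part[OF ex total this weighted_point_complement[OF x]]
  show ?thesis by (simp add: alpha_sum_weighted_point)
qed

lemma extreme_point_arc_unsplit:
  assumes ex: "is_extreme_point x (polyP T L l Clo Cup Vbar V)" and total: "alpha_sum T x = 1"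
    and a0: "a0 \<in> uc_arcs T L l"
  shows "\<not> (0 < x a0 \<and> x a0 < available x (uc_tail a0))"
proof
  assume split: "0 < x a0 \<and> x a0 < available x (uc_tail a0)"
  have x: "x \<in> polyP_cone T L l Clo Cup Vbar V"
    using ex by (simp add: is_extreme_point_def polyP_eq_cone)
  obtain w c where w: "\<And>a. 0 \<le> w a \<and> w a \<le> 1" "w a0 = 1" and "c < 1"
    and source: "outflow (\<lambda>a. w a * x a) 0 = c"
    and balance: "inherits_balance x (\<lambda>a. w a * x a)" "inherits_balance x (\<lambda>a. (1 - w a) * x a)"
    using exists_proportional_split[OF polyP_cone_unit_preflow[OF x total] a0] split by blast
  have "x a0 = weighted_point T L l w x a0"
    using a0 w(2) by (simp add: uc_arcs_def weighted_point_arc)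
  also have "\<dots> = c * x a0"
    using extreme_point_weighted_point_proportional[OF ex total w(1) balance] source
    by (simp add: outflow_source)
  finally show False using split \<open>c < 1\<close> by simp
qed

lemma extreme_point_Beta_not_arc:
  assumes ex: "is_extreme_point x (polyP T L l Clo Cup Vbar V)" and total: "alpha_sum T x = 1"
    and not_arc: "\<not> is_uc_arc T L l (Beta t k)"
  shows "x (Beta t k) = 0"
proof -
  define w where "w v = (if v = Beta t k then 1 else 0 :: real)" for v
  have x: "x \<in> polyP_cone T L l Clo Cup Vbar V"
    using ex by (simp add: is_extreme_point_def polyP_eq_cone)
  have on_arcs: "w a * x a = 0" "(1 - w a) * x a = x a" if "a \<in> uc_arcs T L l" for a
    using that not_arc by (auto simp: w_def uc_arcs_def)
  have "inherits_balance x (\<lambda>a. w a * x a)"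
    using inherits_balance_cong[of "\<lambda>a. w a * x a" "\<lambda>_. 0"] on_arcs inherits_balance_zero by simp
  moreover have "inherits_balance x (\<lambda>a. (1 - w a) * x a)"
    using inherits_balance_cong[of "\<lambda>a. (1 - w a) * x a" x] on_arcs
      inherits_balance_self[OF polyP_cone_unit_preflow[OF x total]] by simp
  ultimately have "weighted_point T L l w x (Beta t k) = 0"
    using extreme_point_weighted_point_proportional[OF ex total] by (simp add: w_def)
  then show ?thesis by (simp add: weighted_point_def w_def)
qed

lemma extreme_point_01:
  assumes ex: "is_extreme_point x (polyP T L l Clo Cup Vbar V)" and total: "alpha_sum T x = 1"
  shows "(\<forall>t. x (Alpha t) \<in> {0,1}) \<and> (\<forall>t k. x (Beta t k) \<in> {0,1}) \<and>
         (\<forall>t k. x (Gamma t k) \<in> {0,1}) \<and> (\<forall>t. x (Theta t) \<in> {0,1})"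
proof -
  have x: "x \<in> polyP_cone T L l Clo Cup Vbar V"
    using ex by (simp add: is_extreme_point_def polyP_eq_cone)
  note preflow = polyP_cone_unit_preflow[OF x total]
    and unsplit = extreme_point_arc_unsplit[OF ex total]
  have arc: "x a \<in> {0, 1}" if "is_uc_arc T L l a" for a
    using arc_flow_01[OF preflow unsplit] that by (simp add: uc_arcs_def)
  have "x (Alpha t) \<in> {0, 1}" for t
    using arc[of "Alpha t"] polyP_cone_vanish[OF x, of "Alpha t"]
    by (cases "is_uc_arc T L l (Alpha t)") simp_all
  moreover have "x (Beta t k) \<in> {0, 1}" for t k
    using arc[of "Beta t k"] extreme_point_Beta_not_arc[OF ex total] by auto
  moreover have "x (Gamma t k) \<in> {0, 1}" for t k
    using arc[of "Gamma t k"] polyP_cone_vanish[OF x, of "Gamma t k"]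
    by (cases "is_uc_arc T L l (Gamma t k)") simp_all
  moreover have "x (Theta t) \<in> {0, 1}" for t
    using available_01[OF preflow unsplit, of "2 * t + 1"] polyP_cone_Theta[OF x, of t]
      polyP_cone_vanish[OF x, of "Theta t"]
    by (cases "T - l \<le> t \<and> t \<le> T") (simp_all add: available_def inflow_end_node)
  ultimately show ?thesis by blast
qed

end

theorem lemma1:
  fixes T L l :: int and Clo Cup Vbar V :: real and x :: "var \<Rightarrow> real"
  assumes "T \<ge> 1" and "L \<ge> 1" and "l \<ge> 1"
    and "is_extreme_point x (polyP T L l Clo Cup Vbar V)"
  shows "(\<forall>t. x (Alpha t) \<in> {0,1}) \<and> (\<forall>t k. x (Beta t k) \<in> {0,1}) \<and>
         (\<forall>t k. x (Gamma t k) \<in> {0,1}) \<and> (\<forall>t. x (Theta t) \<in> {0,1})"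
proof -
  interpret uc_network T L l using assms(2,3) by unfold_locales
  consider "\<forall>v. x v = 0" | "alpha_sum T x = 1"
    using extreme_point_zero_or_alpha_sum_one[OF assms(4)] by blast
  then show ?thesis
    by cases (simp, rule extreme_point_01[OF assms(4)])
qed

end
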